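(* Let $n\ge 2$, let $\Sigma^*$ be an $n\times n$ positive definite matrix with $\Omega^*=(\Sigma^* )^{-1}$, whose conditional independence structure is a tree $T^*$ on $\{1,\dots,n\}$. Let $D^*$ be a diagonal matrix with nonnegative diagonal entries such that $D^*_{ii}>0$ whenever $i$ is a neighbor (in $T^*$) of a leaf of $T^*$, and let $\Sigma^o=\Sigma^*+D^*$. Then for every tree $T^q\in\mathcal{T}_{T^*}$ there exist an $n\times n$ positive definite matrix $\Sigma^q$ whose conditional independence structure is $T^q$ and a diagonal matrix $D^q$ with nonnegative diagonal entries such that $\Sigma^o=\Sigma^q+D^q$.
   Context: For an $n\times n$ positive definite (covariance) matrix $\Sigma$ with inverse $\Omega=\Sigma^{-1}$, its conditional independence structure is the graph on vertex set $\{1,\dots,n\}$ with an edge $\{i,j\}$ ($i\neq j$) if and only if $\Omega_{ij}\neq 0$; "the structure of $\Sigma$ is the tree $T$" means this graph equals $T$. Let $\mathcal{L}$ be the set of leaves of $T^*$. For a subset $\mathcal{S}\subseteq\mathcal{L}$ in which no two leaves share a common neighbor, let $T^{\mathcal{S}}$ be the tree obtained from $T^*$ by exchanging the position of each leaf $a\in\mathcal{S}$ with its unique neighbor $b$ (i.e. the image of $T^*$ under the permutation of vertex labels that swaps each such $a$ with its neighbor $b$). $\mathcal{T}_{T^*}$ is the set of all trees $T^{\mathcal{S}}$ for all such subsets $\mathcal{S}$. *)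

theory Defs
  imports "HOL-Analysis.Analysis"
begin

definition pos_def_mat :: "real^'n^'n \<Rightarrow> bool" where
  "pos_def_mat A \<longleftrightarrow> transpose A = A \<and> (\<forall>x::real^'n. x \<noteq> 0 \<longrightarrow> x \<bullet> (A *v x) > 0)"

definition diag_nonneg :: "real^'n^'n \<Rightarrow> bool" where
  "diag_nonneg D \<longleftrightarrow> (\<forall>i j. i \<noteq> j \<longrightarrow> D$i$j = 0) \<and> (\<forall>i. D$i$i \<ge> 0)"

definition adj :: "'n set set \<Rightarrow> 'n \<Rightarrow> 'n \<Rightarrow> bool" where
  "adj E i j \<longleftrightarrow> i \<noteq> j \<and> {i, j} \<in> E"

definition simple_graph :: "'n set set \<Rightarrow> bool" where
  "simple_graph E \<longleftrightarrow> (\<forall>e\<in>E. card e = 2)"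

definition connected_graph :: "'n set set \<Rightarrow> bool" where
  "connected_graph E \<longleftrightarrow> (\<forall>i j. (adj E)\<^sup>*\<^sup>* i j)"

text \<open>Acyclic: every edge is a bridge (its endpoints are disconnected once it is removed).\<close>
definition acyclic_graph :: "'n set set \<Rightarrow> bool" where
  "acyclic_graph E \<longleftrightarrow> (\<forall>i j. adj E i j \<longrightarrow> \<not> (adj (E - {{i, j}}))\<^sup>*\<^sup>* i j)"

definition is_tree :: "'n set set \<Rightarrow> bool" where
  "is_tree E \<longleftrightarrow> simple_graph E \<and> connected_graph E \<and> acyclic_graph E"

definition ci_structure :: "real^'n^'n \<Rightarrow> 'n set set" where
  "ci_structure S = {{i, j} | i j. i \<noteq> j \<and> matrix_inv S $ i $ j \<noteq> 0}"

definition leaves :: "'n set set \<Rightarrow> 'n set" where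
  "leaves T = {a. card {b. adj T a b} = 1}"

definition nbr :: "'n set set \<Rightarrow> 'n \<Rightarrow> 'n" where
  "nbr T a = (THE b. adj T a b)"

text \<open>Vertex permutation swapping each leaf a in S with its unique neighbour.\<close>
definition swap_perm :: "'n set set \<Rightarrow> 'n set \<Rightarrow> 'n \<Rightarrow> 'n" where
  "swap_perm T S x =
     (if x \<in> S then nbr T x
      else if (\<exists>a\<in>S. nbr T a = x) then (THE a. a \<in> S \<and> nbr T a = x)
      else x)"

definition swap_tree :: "'n set set \<Rightarrow> 'n set \<Rightarrow> 'n set set" where
  "swap_tree T S = (\<lambda>e. swap_perm T S ` e) ` T"

definition admissible_leaf_set :: "'n set set \<Rightarrow> 'n set \<Rightarrow> bool" where
  "admissible_leaf_set T S \<longleftrightarrow> S \<subseteq> leaves T \<and>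
     (\<forall>a\<in>S. \<forall>a'\<in>S. a \<noteq> a' \<longrightarrow> nbr T a \<noteq> nbr T a')"

definition swapped_trees :: "'n set set \<Rightarrow> 'n set set set" where
  "swapped_trees T = {swap_tree T S | S. admissible_leaf_set T S}"

end

theory Submission
  imports Defs
begin

text \<open>Let a be a leaf of the tree and b its neighbour. If X has covariance \<Sigma>, then
  X_a = \<beta> X_b + (noise independent of everything else), so replacing X_a by \<beta> X_b and X_b by
  X_b + \<epsilon>, with \<epsilon> independent of variance t > 0, yields a covariance matrix whose tree is the
  one with a and b exchanged. This changes only the diagonal of \<Sigma>: the (a,a) entry drops by
  the residual variance of X_a and the (b,b) entry grows by t. Taking t = D_bb and performing
  these swaps one leaf at a time (they involve disjoint pairs of vertices) absorbs at most D into
  the diagonal, which leaves a nonnegative diagonal remainder.\<close>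

lemma sum_UNIV_remove_two:
  fixes f :: "'n::finite \<Rightarrow> 'a::comm_monoid_add"
  assumes "a \<noteq> b"
  shows "sum f UNIV = f a + f b + sum f (UNIV - {a, b})"
proof -
  have "sum f UNIV = sum f {a, b} + sum f (UNIV - {a, b})"
    using sum.subset_diff[of "{a, b}" UNIV f] by (simp only: finite UNIV_I subset_UNIV add.commute)
  also have "sum f {a, b} = f a + f b" using assms by simp
  finally show ?thesis .
qed

lemma matrix_inv_unique:
  fixes A B :: "real^'n^'n"
  assumes "B ** A = mat 1"
  shows "matrix_inv A = B"
proof -
  have AB: "A ** B = mat 1" using assms matrix_left_right_inverse by blast
  have "\<exists>A'. A ** A' = mat 1 \<and> A' ** A = mat 1" using assms AB by blast
  then have inv: "A ** matrix_inv A = mat 1 \<and> matrix_inv A ** A = mat 1"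
    unfolding matrix_inv_def by (rule someI_ex)
  have "matrix_inv A = matrix_inv A ** (A ** B)" using AB by simp
  also have "\<dots> = B" using inv by (simp add: matrix_mul_assoc)
  finally show ?thesis .
qed

lemma pos_def_mat_sym:
  assumes "pos_def_mat A"
  shows "A $ i $ j = A $ j $ i"
proof -
  have "transpose A $ j $ i = A $ j $ i" using assms unfolding pos_def_mat_def by simp
  then show ?thesis by (simp add: transpose_def)
qed

lemma pos_def_mat_diag_pos:
  fixes A :: "real^'n^'n"
  assumes "pos_def_mat A"
  shows "A $ i $ i > 0"
proof -
  have "axis i (1::real) \<noteq> 0" by simp
  then have "axis i 1 \<bullet> (A *v axis i 1) > 0" using assms unfolding pos_def_mat_def by blast
  moreover have "axis i 1 \<bullet> (A *v axis i 1) = A $ i $ i"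
    by (simp add: inner_commute[of "axis i 1"] inner_axis matrix_vector_mult_basis column_def)
  ultimately show ?thesis by simp
qed

lemma pos_def_mat_inv_mult:
  fixes A :: "real^'n^'n"
  assumes "pos_def_mat A"
  shows "matrix_inv A ** A = mat 1"
proof -
  have "\<forall>x. A *v x = 0 \<longrightarrow> x = 0"
    using assms unfolding pos_def_mat_def by (metis inner_zero_right less_irrefl)
  then obtain B where "B ** A = mat 1" using matrix_left_invertible_ker by blast
  then show ?thesis using matrix_inv_unique by metis
qed

lemma pos_def_mat_inv_sym:
  fixes A :: "real^'n^'n"
  assumes "pos_def_mat A"
  shows "matrix_inv A $ i $ j = matrix_inv A $ j $ i"
proof -
  have "A ** matrix_inv A = mat 1"
    using pos_def_mat_inv_mult[OF assms] matrix_left_right_inverse by blast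
  then have "transpose (matrix_inv A) ** A = mat 1"
    using assms matrix_transpose_mul[of A "matrix_inv A"] unfolding pos_def_mat_def by simp
  then have "transpose (matrix_inv A) $ j $ i = matrix_inv A $ j $ i"
    using matrix_inv_unique by metis
  then show ?thesis by (simp add: transpose_def)
qed

lemma adj_ci_structure:
  fixes A :: "real^'n^'n"
  assumes "pos_def_mat A"
  shows "adj (ci_structure A) i j \<longleftrightarrow> i \<noteq> j \<and> matrix_inv A $ i $ j \<noteq> 0"
proof
  assume "adj (ci_structure A) i j"
  then obtain k l where "i \<noteq> j" "{i, j} = {k, l}" "matrix_inv A $ k $ l \<noteq> 0"
    unfolding adj_def ci_structure_def by blast
  then show "i \<noteq> j \<and> matrix_inv A $ i $ j \<noteq> 0"
    using pos_def_mat_inv_sym[OF assms] by (metis doubleton_eq_iff)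
qed (auto simp: adj_def ci_structure_def)

lemma inner_matrix_vector_sym:
  fixes A :: "real^'n^'n"
  assumes "transpose A = A"
  shows "x \<bullet> (A *v y) = y \<bullet> (A *v x)"
proof -
  have "x \<bullet> (A *v y) = (transpose A *v x) \<bullet> y" by (simp add: dot_lmul_matrix)
  then show ?thesis using assms by (simp add: inner_commute)
qed

locale leaf_swap =
  fixes S :: "real^'n^'n" and a b :: 'n and t :: real
  assumes pos_def: "pos_def_mat S"
    and a_ne_b: "a \<noteq> b"
    and leaf: "\<And>z. z \<noteq> a \<Longrightarrow> z \<noteq> b \<Longrightarrow> matrix_inv S $ a $ z = 0"
    and edge: "matrix_inv S $ a $ b \<noteq> 0"
    and t_pos: "t > 0"
begin

abbreviation M :: "real^'n^'n" where "M \<equiv> matrix_inv S"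

lemma S_sym: "S $ i $ j = S $ j $ i"
  by (rule pos_def_mat_sym[OF pos_def])

lemma M_sym: "M $ i $ j = M $ j $ i"
  by (rule pos_def_mat_inv_sym[OF pos_def])

lemma M_times_S:
  "M$x$a * S$a$y + M$x$b * S$b$y + (\<Sum>k\<in>UNIV - {a, b}. M$x$k * S$k$y) = (if x = y then 1 else 0)"
proof -
  have "(M ** S) $ x $ y = mat 1 $ x $ y"
    using pos_def_mat_inv_mult[OF pos_def] by simp
  then show ?thesis
    by (simp add: matrix_matrix_mult_def mat_def sum_UNIV_remove_two[OF a_ne_b])
qed

lemma M_times_S_leaf: "M$a$a * S$a$y + M$a$b * S$b$y = (if a = y then 1 else 0)"
  using M_times_S[of a y] by (simp add: leaf)

lemma M_leaf_diag_nonzero: "M$a$a \<noteq> 0"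
proof
  assume "M$a$a = 0"
  then have "M$a$b * S$b$b = 0" using M_times_S_leaf[of b] a_ne_b by simp
  then show False using edge pos_def_mat_diag_pos[OF pos_def, of b] by simp
qed

text \<open>\<beta> is the coefficient of the regression of X_a on X_b.\<close>
definition \<beta> :: real where "\<beta> = - M$a$b / M$a$a"

lemma \<beta>_nonzero: "\<beta> \<noteq> 0"
  using edge M_leaf_diag_nonzero by (simp add: \<beta>_def)

lemma S_leaf_row: "y \<noteq> a \<Longrightarrow> S$a$y = \<beta> * S$b$y"
  using M_times_S_leaf[of y] M_leaf_diag_nonzero by (simp add: \<beta>_def field_simps)

text \<open>residual_dir \<bullet> X = \<beta> X_b - X_a is minus the residual of the regression of X_a on X_b.\<close>
definition residual_dir :: "real^'n" where
  "residual_dir = (\<chi> i. if i = a then -1 else if i = b then \<beta> else 0)"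

lemma S_times_residual_dir: "S *v residual_dir = - (S$a$a - \<beta> * S$a$b) *\<^sub>R axis a 1"
proof -
  have "(S *v residual_dir) $ i = - S$i$a + \<beta> * S$i$b" for i
    using a_ne_b
    by (simp add: matrix_vector_mult_def sum_UNIV_remove_two[OF a_ne_b] residual_dir_def)
  moreover have "- S$i$a + \<beta> * S$i$b = 0" if "i \<noteq> a" for i
    using S_leaf_row[OF that] S_sym[of i a] S_sym[of i b] by simp
  ultimately show ?thesis by (auto simp: vec_eq_iff axis_def S_sym[of a b])
qed

lemma residual_dir_times_S: "residual_dir \<bullet> (S *v x) = - (S$a$a - \<beta> * S$a$b) * x$a"
  using inner_matrix_vector_sym[of S residual_dir x] pos_def S_times_residual_dir
  unfolding pos_def_mat_def by (simp add: inner_axis)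

lemma leaf_residual_variance_pos: "\<beta> * S$a$b < S$a$a"
proof -
  have "residual_dir \<noteq> 0" by (auto simp: vec_eq_iff residual_dir_def)
  then have "residual_dir \<bullet> (S *v residual_dir) > 0"
    using pos_def unfolding pos_def_mat_def by blast
  then show ?thesis using residual_dir_times_S[of residual_dir] by (simp add: residual_dir_def)
qed

text \<open>The covariance of the vector with \<beta> X_b at a, X_b + \<epsilon> at b and X_y elsewhere, where
  \<epsilon> is independent noise of variance t; in its tree a is the inner vertex and b the leaf.\<close>
definition swapped_cov :: "real^'n^'n" where
  "swapped_cov = (\<chi> i j. if i = a \<and> j = a then \<beta> * S$a$b
                          else if i = b \<and> j = b then S$b$b + t else S$i$j)"

lemma pos_def_swapped_cov: "pos_def_mat swapped_cov"
proof -
  define v where "v = S$a$a - \<beta> * S$a$b"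
  let ?w = residual_dir
  have x_S_w: "y \<bullet> (S *v ?w) = - v * y$a" for y
    using S_times_residual_dir by (simp add: v_def inner_axis)
  have w_S_x: "?w \<bullet> (S *v y) = - v * y$a" for y
    using residual_dir_times_S by (simp add: v_def)
  have w_a: "?w $ a = -1" by (simp add: residual_dir_def)
  have S_complement:
    "(x + x$a *\<^sub>R ?w) \<bullet> (S *v (x + x$a *\<^sub>R ?w)) = x \<bullet> (S *v x) - v * (x$a)^2" for x
  proof -
    have "(x + c *\<^sub>R ?w) \<bullet> (S *v (x + c *\<^sub>R ?w)) =
        x \<bullet> (S *v x) + c * (x \<bullet> (S *v ?w)) + c * (?w \<bullet> (S *v x)) + c * c * (?w \<bullet> (S *v ?w))"
      for c
      by (simp add: matrix_vector_right_distrib matrix_vector_mult_scaleR inner_add_left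
          inner_add_right algebra_simps)
    then show ?thesis by (simp add: x_S_w w_S_x w_a power2_eq_square)
  qed
  define d where "d i = (if i = a then - v else if i = b then t else 0)" for i
  have "swapped_cov *v x = S *v x + (\<chi> i. d i * x$i)" for x
  proof -
    have "swapped_cov = S + (\<chi> i j. if i = j then d i else 0)"
      using a_ne_b by (auto simp: vec_eq_iff swapped_cov_def d_def v_def)
    moreover have "(\<chi> i j. if i = j then d i else 0) *v x = (\<chi> i. d i * x$i)"
      by (simp add: vec_eq_iff matrix_vector_mult_def if_distrib[of "\<lambda>u. u * _"] cong: if_cong)
    ultimately show ?thesis by (simp add: matrix_vector_mult_add_rdistrib)
  qed
  moreover have "x \<bullet> (\<chi> i. d i * x$i) = - v * (x$a)^2 + t * (x$b)^2" for x
    using a_ne_b by (simp add: inner_vec_def sum_UNIV_remove_two[OF a_ne_b] d_def power2_eq_square)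
  ultimately have quad:
    "x \<bullet> (swapped_cov *v x) = (x + x$a *\<^sub>R ?w) \<bullet> (S *v (x + x$a *\<^sub>R ?w)) + t * (x$b)^2" for x
    by (simp add: inner_add_right S_complement)
  have "x \<bullet> (swapped_cov *v x) > 0" if "x \<noteq> 0" for x
  proof (cases "x + x$a *\<^sub>R ?w = 0")
    case False
    then show ?thesis
      using pos_def quad[of x] t_pos unfolding pos_def_mat_def
      by (smt (verit) zero_le_power2 mult_nonneg_nonneg)
  next
    case True
    then have "(x + x$a *\<^sub>R ?w) $ b = 0" by simp
    then have "x$b = - \<beta> * x$a" using a_ne_b by (simp add: residual_dir_def algebra_simps)
    moreover have "x$a \<noteq> 0" using True that by auto
    ultimately have "t * (x$b)^2 > 0" using t_pos \<beta>_nonzero by simp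
    then show ?thesis using quad[of x] True by simp
  qed
  moreover have "transpose swapped_cov = swapped_cov"
    by (simp add: vec_eq_iff transpose_def swapped_cov_def S_sym)
  ultimately show ?thesis unfolding pos_def_mat_def by blast
qed

text \<open>M$b$b + \<beta> * M$a$b is the Schur complement: the precision of X_b once the leaf a is
  marginalised out. The 1/t terms come from the conditional law of X_b + \<epsilon> given \<beta> X_b.\<close>
definition swapped_prec :: "real^'n^'n" where
  "swapped_prec = (\<chi> x y.
     if x = a \<and> y = a then (M$b$b + \<beta> * M$a$b + 1/t) / \<beta>^2
     else if x = b \<and> y = b then 1/t
     else if x \<in> {a, b} \<and> y \<in> {a, b} then - 1 / (t * \<beta>)
     else if x = b \<or> y = b then 0
     else if x = a then M$b$y / \<beta>
     else if y = a then M$x$b / \<beta>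
     else M$x$y)"

lemma swapped_prec_times_S:
  assumes "y \<noteq> a"
  shows "(\<Sum>k\<in>UNIV. swapped_prec$x$k * S$k$y) =
    (if x = y \<and> y \<noteq> b then 1 else if x = a \<and> y = b then 1 / \<beta> else 0)"
proof -
  let ?P = swapped_prec
  have split: "(\<Sum>k\<in>UNIV. ?P$x$k * S$k$y) =
      ?P$x$a * (\<beta> * S$b$y) + ?P$x$b * S$b$y + (\<Sum>k\<in>UNIV - {a, b}. ?P$x$k * S$k$y)"
    using S_leaf_row[OF assms] by (simp add: sum_UNIV_remove_two[OF a_ne_b])
  consider "x = a" | "x = b" | "x \<notin> {a, b}" by blast
  then show ?thesis
  proof cases
    case 1
    define R where "R = (\<Sum>k\<in>UNIV - {a, b}. M$b$k * S$k$y)"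
    have "(\<Sum>k\<in>UNIV - {a, b}. ?P$x$k * S$k$y) = R / \<beta>"
      unfolding R_def sum_divide_distrib
      by (intro sum.cong) (use 1 a_ne_b in \<open>auto simp: swapped_prec_def\<close>)
    moreover have "?P$x$a * (\<beta> * S$b$y) + ?P$x$b * S$b$y = (M$b$b + \<beta> * M$a$b) * S$b$y / \<beta>"
      using 1 a_ne_b \<beta>_nonzero t_pos by (simp add: swapped_prec_def field_simps power2_eq_square)
    moreover have "(M$b$b + \<beta> * M$a$b) * S$b$y + R = (if b = y then 1 else 0)"
      using M_times_S[of b y] S_leaf_row[OF assms] M_sym[of b a] unfolding R_def
      by (simp add: algebra_simps)
    ultimately show ?thesis
      using split 1 assms by (simp add: add_divide_distrib[symmetric])
  next
    case 2
    have "(\<Sum>k\<in>UNIV - {a, b}. ?P$x$k * S$k$y) = 0"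
      using 2 a_ne_b by (auto simp: swapped_prec_def intro!: sum.neutral)
    then show ?thesis
      using split 2 a_ne_b \<beta>_nonzero t_pos by (simp add: swapped_prec_def field_simps)
  next
    case 3
    have "(\<Sum>k\<in>UNIV - {a, b}. ?P$x$k * S$k$y) = (\<Sum>k\<in>UNIV - {a, b}. M$x$k * S$k$y)"
      by (intro sum.cong) (use 3 in \<open>auto simp: swapped_prec_def\<close>)
    moreover have "M$x$a = 0" using leaf[of x] M_sym[of x a] 3 by simp
    ultimately show ?thesis
      using split M_times_S[of x y] 3 \<beta>_nonzero by (auto simp: swapped_prec_def)
  qed
qed

lemma swapped_cov_col_a: "swapped_cov $ k $ a = \<beta> * S $ k $ b"
  using S_leaf_row[of k] S_leaf_row[of b] S_sym[of k a] S_sym[of k b] S_sym[of b a] a_ne_b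
  by (cases "k = a") (auto simp: swapped_cov_def)

lemma swapped_cov_col_b: "swapped_cov $ k $ b = S $ k $ b + (if k = b then t else 0)"
  using a_ne_b by (simp add: swapped_cov_def)

lemma swapped_cov_col_other: "y \<noteq> a \<Longrightarrow> y \<noteq> b \<Longrightarrow> swapped_cov $ k $ y = S $ k $ y"
  by (simp add: swapped_cov_def)

lemma swapped_prec_times_swapped_cov: "swapped_prec ** swapped_cov = mat 1"
proof -
  have "(\<Sum>k\<in>UNIV. swapped_prec$x$k * swapped_cov$k$y) = (if x = y then 1 else 0)" for x y
  proof -
    consider "y = a" | "y = b" | "y \<notin> {a, b}" by blast
    then show ?thesis
    proof cases
      case 1
      then have "(\<Sum>k\<in>UNIV. swapped_prec$x$k * swapped_cov$k$y) =
          \<beta> * (\<Sum>k\<in>UNIV. swapped_prec$x$k * S$k$b)"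
        by (simp add: swapped_cov_col_a sum_distrib_left algebra_simps)
      then show ?thesis using 1 a_ne_b \<beta>_nonzero by (simp add: swapped_prec_times_S)
    next
      case 2
      then have "(\<Sum>k\<in>UNIV. swapped_prec$x$k * swapped_cov$k$y) =
          (\<Sum>k\<in>UNIV. swapped_prec$x$k * S$k$b) + t * swapped_prec$x$b"
        by (simp add: swapped_cov_col_b distrib_left sum.distrib if_distrib[of "\<lambda>u. _ * u"]
            cong: if_cong)
      moreover have "swapped_prec$x$b = (if x = b then 1/t else if x = a then - 1 / (t * \<beta>) else 0)"
        using a_ne_b by (simp add: swapped_prec_def)
      ultimately show ?thesis
        using 2 a_ne_b \<beta>_nonzero t_pos swapped_prec_times_S[of b x] by auto
    next
      case 3
      then show ?thesis by (simp add: swapped_cov_col_other swapped_prec_times_S)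
    qed
  qed
  then show ?thesis by (simp add: vec_eq_iff matrix_matrix_mult_def mat_def)
qed

lemma matrix_inv_swapped_cov: "matrix_inv swapped_cov = swapped_prec"
  by (rule matrix_inv_unique[OF swapped_prec_times_swapped_cov])

lemma matrix_inv_swapped_cov_nonzero_iff:
  assumes "x \<noteq> y"
  shows "matrix_inv swapped_cov $ x $ y \<noteq> 0 \<longleftrightarrow>
    M $ Transposition.transpose a b x $ Transposition.transpose a b y \<noteq> 0"
proof -
  have edge_entries: "M $ b $ a \<noteq> 0" "swapped_prec $ a $ b \<noteq> 0" "swapped_prec $ b $ a \<noteq> 0"
    using edge M_sym[of a b] a_ne_b \<beta>_nonzero t_pos by (simp_all add: swapped_prec_def)
  have other_entries:
    "swapped_prec $ a $ z = M $ b $ z / \<beta>" "swapped_prec $ z $ a = M $ z $ b / \<beta>"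
    "swapped_prec $ b $ z = 0" "swapped_prec $ z $ b = 0" "M $ a $ z = 0" "M $ z $ a = 0"
    if "z \<notin> {a, b}" for z
    using that a_ne_b leaf M_sym[of z a] by (simp_all add: swapped_prec_def)
  have unchanged_entries: "swapped_prec $ z $ w = M $ z $ w"
    if "z \<notin> {a, b}" "w \<notin> {a, b}" for z w
    using that by (simp add: swapped_prec_def)
  consider "x = a" "y = b" | "x = b" "y = a" | "x = a" "y \<notin> {a, b}" | "x = b" "y \<notin> {a, b}"
    | "x \<notin> {a, b}" "y = a" | "x \<notin> {a, b}" "y = b" | "x \<notin> {a, b}" "y \<notin> {a, b}"
    using assms by blast
  then show ?thesis
    unfolding matrix_inv_swapped_cov
    by cases (auto simp: edge_entries other_entries unchanged_entries
        assms a_ne_b edge \<beta>_nonzero Transposition.transpose_def)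
qed

end

lemma adj_sym: "adj T i j \<Longrightarrow> adj T j i"
  unfolding adj_def by (metis insert_commute)

lemma leaf_adj_nbr:
  assumes "a \<in> leaves T"
  shows "adj T a (nbr T a)" and "adj T a z \<Longrightarrow> z = nbr T a"
proof -
  obtain b where b: "{b. adj T a b} = {b}"
    using assms card_1_singletonE unfolding leaves_def by blast
  then have "nbr T a = b" unfolding nbr_def by auto
  with b show "adj T a (nbr T a)" and "adj T a z \<Longrightarrow> z = nbr T a" by auto
qed

definition disjoint_swaps :: "'n set set \<Rightarrow> 'n set \<Rightarrow> bool" where
  "disjoint_swaps T S \<longleftrightarrow> inj_on (nbr T) S \<and> (\<forall>a\<in>S. nbr T a \<notin> S)"

lemma disjoint_swaps_subset: "disjoint_swaps T S \<Longrightarrow> S' \<subseteq> S \<Longrightarrow> disjoint_swaps T S'"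
  unfolding disjoint_swaps_def by (meson inj_on_subset subsetD)

lemma disjoint_swaps_insert:
  assumes "disjoint_swaps T (insert a S)" and "a \<notin> S"
  shows "nbr T a \<noteq> a" "a \<notin> nbr T ` S" "nbr T a \<notin> S" "nbr T a \<notin> nbr T ` S"
  using assms unfolding disjoint_swaps_def inj_on_def by auto

lemma swap_perm_leaf: "a \<in> S \<Longrightarrow> swap_perm T S a = nbr T a"
  by (simp add: swap_perm_def)

lemma swap_perm_nbr:
  assumes "disjoint_swaps T S" and "a \<in> S"
  shows "swap_perm T S (nbr T a) = a"
proof -
  have "(THE a'. a' \<in> S \<and> nbr T a' = nbr T a) = a"
    using assms unfolding disjoint_swaps_def by (intro the_equality) (auto dest: inj_onD)
  then show ?thesis using assms unfolding disjoint_swaps_def swap_perm_def by auto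
qed

lemma swap_perm_fixed: "x \<notin> S \<Longrightarrow> x \<notin> nbr T ` S \<Longrightarrow> swap_perm T S x = x"
  by (auto simp: swap_perm_def)

lemma swap_perm_involution:
  assumes "disjoint_swaps T S"
  shows "swap_perm T S (swap_perm T S x) = x"
proof -
  consider "x \<in> S" | a where "a \<in> S" "x = nbr T a" | "x \<notin> S" "x \<notin> nbr T ` S" by blast
  then show ?thesis
    by cases (simp_all add: swap_perm_leaf swap_perm_nbr[OF assms] swap_perm_fixed)
qed

lemma swap_perm_insert:
  assumes "disjoint_swaps T (insert a S)" and "a \<notin> S"
  shows "swap_perm T (insert a S) x = swap_perm T S (Transposition.transpose a (nbr T a) x)"
proof -
  note fresh = disjoint_swaps_insert[OF assms]
  consider "x = a" | "x = nbr T a" | "x \<noteq> a" "x \<noteq> nbr T a" by blast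
  then show ?thesis
  proof cases
    case 3
    then have "(\<lambda>a'. a' \<in> insert a S \<and> nbr T a' = x) = (\<lambda>a'. a' \<in> S \<and> nbr T a' = x)" by auto
    with 3 show ?thesis by (simp add: swap_perm_def Transposition.transpose_def)
  qed (use assms fresh in \<open>simp_all add: swap_perm_leaf swap_perm_nbr swap_perm_fixed\<close>)
qed

lemma swap_tree_adjacent_leaves:
  assumes "is_tree T" and "a \<in> S" "nbr T a \<in> S" and "S \<subseteq> leaves T"
  shows "swap_tree T S = T"
proof -
  define b where "b = nbr T a"
  have a_leaf: "a \<in> leaves T" and b_leaf: "b \<in> leaves T" using assms by (auto simp: b_def)
  have "adj T b a" using adj_sym[OF leaf_adj_nbr(1)[OF a_leaf]] by (simp add: b_def)
  then have nbr_b: "nbr T b = a" using leaf_adj_nbr(2)[OF b_leaf] by simp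
  have vertices: "x \<in> {a, b}" for x
  proof -
    have "(adj T)\<^sup>*\<^sup>* a x"
      using assms(1) unfolding is_tree_def connected_graph_def by blast
    then show ?thesis
      by induction (use leaf_adj_nbr(2)[OF a_leaf] leaf_adj_nbr(2)[OF b_leaf] nbr_b b_def in auto)
  qed
  have "swap_perm T S ` e = e" if "e \<in> T" for e
  proof -
    have "card e = 2" using assms(1) that unfolding is_tree_def simple_graph_def by blast
    moreover have "e \<subseteq> {a, b}" using vertices by blast
    moreover have "a \<noteq> b" using leaf_adj_nbr(1)[OF a_leaf] by (simp add: adj_def b_def)
    ultimately have "e = {a, b}" by (simp add: card_subset_eq)
    then show ?thesis
      using assms(2,3) nbr_b by (auto simp: swap_perm_leaf b_def)
  qed
  then show ?thesis unfolding swap_tree_def by simp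
qed

lemma ci_structure_relabel:
  fixes A B :: "real^'n^'n"
  assumes involution: "\<And>x. p (p x) = x"
    and pattern: "\<And>x y. x \<noteq> y \<Longrightarrow> matrix_inv A $ x $ y \<noteq> 0 \<longleftrightarrow> matrix_inv B $ p x $ p y \<noteq> 0"
  shows "ci_structure A = (\<lambda>e. p ` e) ` ci_structure B"
proof (intro equalityI subsetI)
  fix e assume "e \<in> ci_structure A"
  then obtain i j where e: "e = {i, j}" "i \<noteq> j" "matrix_inv A $ i $ j \<noteq> 0"
    unfolding ci_structure_def by blast
  have "p i \<noteq> p j" using e(2) involution by metis
  moreover have "matrix_inv B $ p i $ p j \<noteq> 0" using pattern[OF e(2)] e(3) by simp
  ultimately have "{p i, p j} \<in> ci_structure B" unfolding ci_structure_def by blast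
  moreover have "e = p ` {p i, p j}" using e involution by simp
  ultimately show "e \<in> (\<lambda>e. p ` e) ` ci_structure B" by blast
next
  fix e assume "e \<in> (\<lambda>e. p ` e) ` ci_structure B"
  then obtain i j where e: "e = {p i, p j}" "i \<noteq> j" "matrix_inv B $ i $ j \<noteq> 0"
    unfolding ci_structure_def by blast
  then have "p i \<noteq> p j" using involution by metis
  then show "e \<in> ci_structure A"
    using e pattern[of "p i" "p j"] involution unfolding ci_structure_def by auto
qed

lemma leaf_swaps_by_diagonal_shift:
  fixes Sg D :: "real^'n^'n"
  assumes pos_def: "pos_def_mat Sg" and T: "ci_structure Sg = T"
    and "S \<subseteq> leaves T" and "disjoint_swaps T S"
    and "\<forall>a\<in>S. D $ nbr T a $ nbr T a > 0"
  shows "\<exists>Sq. pos_def_mat Sq \<and> (\<forall>x y. x \<noteq> y \<longrightarrow> Sq$x$y = Sg$x$y)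
    \<and> (\<forall>x. Sq$x$x \<le> Sg$x$x + (if x \<in> nbr T ` S then D$x$x else 0))
    \<and> (\<forall>x y. x \<noteq> y \<longrightarrow>
         (matrix_inv Sq $ x $ y \<noteq> 0 \<longleftrightarrow> matrix_inv Sg $ swap_perm T S x $ swap_perm T S y \<noteq> 0))"
proof -
  have "finite S" by simp
  then show ?thesis using assms(3-5)
  proof (induction S rule: finite_induct)
    case empty
    show ?case using pos_def by (intro exI[of _ Sg]) (simp add: swap_perm_def)
  next
    case (insert a S)
    define b where "b = nbr T a"
    define p where "p = swap_perm T S"
    have disjoint: "disjoint_swaps T S" using insert.prems(2) disjoint_swaps_subset by blast
    note fresh = disjoint_swaps_insert[OF insert.prems(2) insert.hyps(2), folded b_def]
    obtain Sq where pos_def_q: "pos_def_mat Sq" and off_diag_q: "\<forall>x y. x \<noteq> y \<longrightarrow> Sq$x$y = Sg$x$y"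
      and diag_q: "\<forall>x. Sq$x$x \<le> Sg$x$x + (if x \<in> nbr T ` S then D$x$x else 0)"
      and pattern_q: "\<And>x y. x \<noteq> y \<Longrightarrow>
          matrix_inv Sq $ x $ y \<noteq> 0 \<longleftrightarrow> matrix_inv Sg $ p x $ p y \<noteq> 0"
      using insert.IH insert.prems disjoint unfolding p_def by auto
    have p_a: "p a = a" and p_b: "p b = b"
      using fresh insert.hyps(2) by (simp_all add: p_def swap_perm_fixed)
    have p_p: "p (p x) = x" for x using swap_perm_involution[OF disjoint] by (simp add: p_def)
    have adj_T: "adj T i j \<longleftrightarrow> i \<noteq> j \<and> matrix_inv Sg $ i $ j \<noteq> 0" for i j
      unfolding T[symmetric] by (rule adj_ci_structure[OF pos_def])
    have a_leaf: "a \<in> leaves T" using insert.prems(1) by blast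
    have "matrix_inv Sq $ a $ b \<noteq> 0"
      using leaf_adj_nbr(1)[OF a_leaf] adj_T pattern_q[of a b] p_a p_b by (simp add: b_def)
    moreover have "matrix_inv Sq $ a $ z = 0" if "z \<noteq> a" "z \<noteq> b" for z
    proof (rule ccontr)
      assume "matrix_inv Sq $ a $ z \<noteq> 0"
      then have "adj T a (p z)" using pattern_q[of a z] that p_a p_p adj_T by metis
      then have "p z = p b" using leaf_adj_nbr(2)[OF a_leaf] p_b by (simp add: b_def)
      then show False using p_p that by metis
    qed
    moreover have "D$b$b > 0" using insert.prems(3) by (simp add: b_def)
    ultimately interpret leaf_swap Sq a b "D$b$b"
      using pos_def_q fresh by unfold_locales (auto simp: b_def)
    have "swap_perm T (insert a S) x = p (Transposition.transpose a b x)" for x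
      using swap_perm_insert[OF insert.prems(2) insert.hyps(2)] by (simp add: p_def b_def)
    moreover have "Transposition.transpose a b x \<noteq> Transposition.transpose a b y" if "x \<noteq> y" for x y
      using that transpose_eq_imp_eq by metis
    ultimately have "matrix_inv swapped_cov $ x $ y \<noteq> 0 \<longleftrightarrow>
        matrix_inv Sg $ swap_perm T (insert a S) x $ swap_perm T (insert a S) y \<noteq> 0"
      if "x \<noteq> y" for x y
      using matrix_inv_swapped_cov_nonzero_iff[OF that] pattern_q that by metis
    moreover have "swapped_cov$x$x \<le> Sg$x$x + (if x \<in> nbr T ` insert a S then D$x$x else 0)" for x
    proof -
      have "nbr T ` insert a S = insert b (nbr T ` S)" by (simp add: b_def)
      then show ?thesis
        using diag_q[rule_format, of x] leaf_residual_variance_pos fresh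
        by (auto simp: swapped_cov_def split: if_splits)
    qed
    ultimately show ?case
      using pos_def_swapped_cov off_diag_q by (intro exI[of _ swapped_cov]) (simp add: swapped_cov_def)
  qed
qed

lemma swap_tree_by_diagonal_shift:
  fixes Sg D :: "real^'n^'n"
  assumes "pos_def_mat Sg" and "ci_structure Sg = T"
    and "S \<subseteq> leaves T" and "disjoint_swaps T S"
    and "diag_nonneg D" and "\<forall>a\<in>S. D $ nbr T a $ nbr T a > 0"
  shows "\<exists>Sq Dq :: real^'n^'n. pos_def_mat Sq \<and> ci_structure Sq = swap_tree T S \<and>
           diag_nonneg Dq \<and> Sg + D = Sq + Dq"
proof -
  obtain Sq where "pos_def_mat Sq" and off_diag: "\<forall>x y. x \<noteq> y \<longrightarrow> Sq$x$y = Sg$x$y"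
    and diag: "\<forall>x. Sq$x$x \<le> Sg$x$x + (if x \<in> nbr T ` S then D$x$x else 0)"
    and pattern: "\<forall>x y. x \<noteq> y \<longrightarrow>
        (matrix_inv Sq $ x $ y \<noteq> 0 \<longleftrightarrow> matrix_inv Sg $ swap_perm T S x $ swap_perm T S y \<noteq> 0)"
    using leaf_swaps_by_diagonal_shift[OF assms(1-4,6)] by (elim exE conjE) (rule that)
  moreover have "ci_structure Sq = (\<lambda>e. swap_perm T S ` e) ` ci_structure Sg"
    by (rule ci_structure_relabel) (use pattern swap_perm_involution[OF assms(4)] in auto)
  then have "ci_structure Sq = swap_tree T S" unfolding swap_tree_def assms(2) .
  moreover have "diag_nonneg (Sg + D - Sq)"
  proof -
    have "Sq$x$x \<le> Sg$x$x + D$x$x" for x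
      using diag[rule_format, of x] assms(5) unfolding diag_nonneg_def
      by (simp split: if_splits) (smt (verit))
    then show ?thesis using assms(5) off_diag unfolding diag_nonneg_def by simp
  qed
  ultimately show ?thesis by (intro exI[of _ Sq] exI[of _ "Sg + D - Sq"]) auto
qed

theorem theorem1:
  fixes Sigma_star D_star :: "real^'n^'n" and T_star :: "'n set set"
  assumes "CARD('n) \<ge> 2"
    and "pos_def_mat Sigma_star"
    and "is_tree T_star"
    and "ci_structure Sigma_star = T_star"
    and "diag_nonneg D_star"
    and "\<And>i a. a \<in> leaves T_star \<Longrightarrow> adj T_star i a \<Longrightarrow> D_star $ i $ i > 0"
    and "Tq \<in> swapped_trees T_star"
  shows "\<exists>Sigma_q D_q :: real^'n^'n. pos_def_mat Sigma_q \<and> ci_structure Sigma_q = Tq \<and>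
           diag_nonneg D_q \<and> Sigma_star + D_star = Sigma_q + D_q"
proof -
  obtain S where "admissible_leaf_set T_star S" and Tq: "Tq = swap_tree T_star S"
    using assms(7) unfolding swapped_trees_def by blast
  then have leaves: "S \<subseteq> leaves T_star"
    and nbr_inj: "\<forall>a\<in>S. \<forall>a'\<in>S. a \<noteq> a' \<longrightarrow> nbr T_star a \<noteq> nbr T_star a'"
    unfolding admissible_leaf_set_def by blast+
  show ?thesis
  proof (cases "disjoint_swaps T_star S")
    case True
    have "\<forall>a\<in>S. D_star $ nbr T_star a $ nbr T_star a > 0"
      using leaves assms(6) adj_sym[OF leaf_adj_nbr(1)] by (metis subsetD)
    then show ?thesis
      using swap_tree_by_diagonal_shift[OF assms(2,4) leaves True assms(5)] Tq by simp
  next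
    case False
    then obtain a where "a \<in> S" "nbr T_star a \<in> S"
      using nbr_inj unfolding disjoint_swaps_def inj_on_def by blast
    then have "Tq = T_star" using swap_tree_adjacent_leaves[OF assms(3) _ _ leaves] Tq by simp
    then show ?thesis using assms(2,4,5) by blast
  qed
qed

end
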